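(* Let $\mathcal{S}^1,\dots,\mathcal{S}^k$ be level-disjoint partitions of a connected graph $G$, all rooted in the same vertex $v$. Then $\max_{1\le i\le k} h(\mathcal{S}^i)\ge \mathrm{ecc}(v)+k-1$ if $G$ is not bipartite, and $\max_{1\le i\le k} h(\mathcal{S}^i)\ge \mathrm{ecc}(v)+2k-2$ if $G$ is bipartite.
   Context: For $S\subseteq V(G)$, $N(S)$ is the set of vertices adjacent to some vertex of $S$. A level partition of $G$ is a tuple $\mathcal{S}=(S_0,\dots,S_h)$ of pairwise disjoint sets with union $V(G)$ such that $S_i\subseteq N(S_{i-1})$ for $1\le i\le h$; $h(\mathcal{S})=h$ is its height; it is rooted in $v$ if $S_0=\{v\}$. Level partitions are level-disjoint if for every two of them $\mathcal{S},\mathcal{T}$, $S_i\cap T_i=\emptyset$ for every $1\le i\le\min(h(\mathcal{S}),h(\mathcal{T}))$. $\mathrm{ecc}(v)=\max_{u\in V(G)} d(u,v)$. *)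

theory Defs
  imports Main
begin

definition simple_graph :: "'a set \<Rightarrow> ('a \<Rightarrow> 'a \<Rightarrow> bool) \<Rightarrow> bool" where
  "simple_graph V E \<longleftrightarrow> finite V \<and> (\<forall>x y. E x y \<longrightarrow> x \<in> V \<and> y \<in> V)
     \<and> (\<forall>x y. E x y \<longrightarrow> E y x) \<and> (\<forall>x. \<not> E x x)"

text \<open>Walk given as list of vertices; its length is the number of edges.\<close>
definition is_walk :: "'a set \<Rightarrow> ('a \<Rightarrow> 'a \<Rightarrow> bool) \<Rightarrow> 'a list \<Rightarrow> bool" where
  "is_walk V E p \<longleftrightarrow> p \<noteq> [] \<and> set p \<subseteq> V \<and> (\<forall>i. Suc i < length p \<longrightarrow> E (p ! i) (p ! Suc i))"

definition connected_graph :: "'a set \<Rightarrow> ('a \<Rightarrow> 'a \<Rightarrow> bool) \<Rightarrow> bool" where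
  "connected_graph V E \<longleftrightarrow> (\<forall>u\<in>V. \<forall>w\<in>V. \<exists>p. is_walk V E p \<and> hd p = u \<and> last p = w)"

definition bipartite_graph :: "'a set \<Rightarrow> ('a \<Rightarrow> 'a \<Rightarrow> bool) \<Rightarrow> bool" where
  "bipartite_graph V E \<longleftrightarrow> (\<exists>A \<subseteq> V. \<forall>x y. E x y \<longrightarrow> (x \<in> A \<longleftrightarrow> y \<notin> A))"

definition gdist :: "'a set \<Rightarrow> ('a \<Rightarrow> 'a \<Rightarrow> bool) \<Rightarrow> 'a \<Rightarrow> 'a \<Rightarrow> nat" where
  "gdist V E u w = (LEAST n. \<exists>p. is_walk V E p \<and> hd p = u \<and> last p = w \<and> length p = Suc n)"

definition ecc :: "'a set \<Rightarrow> ('a \<Rightarrow> 'a \<Rightarrow> bool) \<Rightarrow> 'a \<Rightarrow> nat" where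
  "ecc V E v = Max ((\<lambda>u. gdist V E u v) ` V)"

definition nbhd :: "('a \<Rightarrow> 'a \<Rightarrow> bool) \<Rightarrow> 'a set \<Rightarrow> 'a set" where
  "nbhd E S = {y. \<exists>x\<in>S. E x y}"

text \<open>A level partition (S_0,...,S_h) is represented as a list of length h+1.\<close>
definition level_partition :: "'a set \<Rightarrow> ('a \<Rightarrow> 'a \<Rightarrow> bool) \<Rightarrow> 'a set list \<Rightarrow> bool" where
  "level_partition V E S \<longleftrightarrow> S \<noteq> []
     \<and> (\<forall>i j. i < length S \<longrightarrow> j < length S \<longrightarrow> i \<noteq> j \<longrightarrow> S ! i \<inter> S ! j = {})
     \<and> \<Union> (set S) = V
     \<and> (\<forall>i. 1 \<le> i \<longrightarrow> i < length S \<longrightarrow> S ! i \<subseteq> nbhd E (S ! (i - 1)))"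

definition height :: "'a set list \<Rightarrow> nat" where
  "height S = length S - 1"

definition rooted_in :: "'a set list \<Rightarrow> 'a \<Rightarrow> bool" where
  "rooted_in S v \<longleftrightarrow> S \<noteq> [] \<and> S ! 0 = {v}"

definition level_disjoint :: "'a set list \<Rightarrow> 'a set list \<Rightarrow> bool" where
  "level_disjoint S T \<longleftrightarrow> (\<forall>i. 1 \<le> i \<longrightarrow> i \<le> min (height S) (height T) \<longrightarrow> S ! i \<inter> T ! i = {})"

end

theory Submission
  imports Defs
begin

text \<open>Take a vertex u at distance ecc(v) from v. In every partition the level of u is at least
  ecc(v), since a vertex of level j is joined to the root by a walk of length j, and at most the
  maximal height. Level-disjointness forces the k levels of u to be distinct, so k distinct numbers
  lie in the interval from ecc(v) to the maximal height. In a bipartite graph all walks from u to v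
  have the same parity, so these k numbers even share the parity of ecc(v).\<close>

lemma is_walk_Cons:
  assumes "is_walk V E p" and "u \<in> V" and "E u (hd p)"
  shows "is_walk V E (u # p)"
  unfolding is_walk_def
proof (intro conjI allI impI)
  show "set (u # p) \<subseteq> V" using assms(1,2) by (simp add: is_walk_def)
  fix i assume i: "Suc i < length (u # p)"
  show "E ((u # p) ! i) ((u # p) ! Suc i)"
  proof (cases i)
    case 0
    then show ?thesis using assms(1,3) by (cases p) (auto simp: is_walk_def)
  next
    case (Suc m)
    then show ?thesis using assms(1) i by (simp add: is_walk_def)
  qed
qed simp

lemma gdist_le_walk_length:
  assumes "is_walk V E p" and "hd p = u" and "last p = w"
  shows "gdist V E u w \<le> length p - 1"
  unfolding gdist_def
proof (rule Least_le)
  show "\<exists>q. is_walk V E q \<and> hd q = u \<and> last q = w \<and> length q = Suc (length p - 1)"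
    using assms by (intro exI[of _ p]) (auto simp: is_walk_def)
qed

lemma gdist_walk:
  assumes "connected_graph V E" and "u \<in> V" and "w \<in> V"
  obtains p where "is_walk V E p" "hd p = u" "last p = w" "length p = Suc (gdist V E u w)"
proof -
  obtain p where p: "is_walk V E p" "hd p = u" "last p = w"
    using assms unfolding connected_graph_def by blast
  then have "\<exists>n q. is_walk V E q \<and> hd q = u \<and> last q = w \<and> length q = Suc n"
    by (intro exI[of _ "length p - 1"] exI[of _ p]) (auto simp: is_walk_def)
  from LeastI_ex[OF this] show ?thesis
    using that unfolding gdist_def by blast
qed

lemma gdist_pos:
  assumes "connected_graph V E" and "u \<in> V" and "w \<in> V" and "u \<noteq> w"
  shows "0 < gdist V E u w"
proof (rule ccontr)
  assume "\<not> 0 < gdist V E u w"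
  moreover obtain p where "hd p = u" "last p = w" "length p = Suc (gdist V E u w)"
    using gdist_walk[OF assms(1-3)] by blast
  ultimately show False
    using assms(4) by (cases p) auto
qed

lemma ecc_attained:
  assumes "finite V" and "v \<in> V"
  obtains u where "u \<in> V" "gdist V E u v = ecc V E v"
proof -
  have "ecc V E v \<in> (\<lambda>u. gdist V E u v) ` V"
    unfolding ecc_def using assms by (intro Max_in) auto
  then show ?thesis using that by auto
qed

lemma ecc_pos:
  assumes "finite V" and "connected_graph V E" and "card V \<ge> 2" and "v \<in> V"
  shows "0 < ecc V E v"
proof -
  have "\<not> V \<subseteq> {v}"
    using assms(3) card_mono[of "{v}" V] by auto
  then obtain w where w: "w \<in> V" "w \<noteq> v" by auto
  have "gdist V E w v \<le> ecc V E v"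
    unfolding ecc_def using assms(1) w(1) by (intro Max_ge) auto
  with gdist_pos[OF assms(2) w(1) assms(4) w(2)] show ?thesis by simp
qed

lemma bipartite_walk_nth:
  assumes "is_walk V E p" and "\<forall>x y. E x y \<longrightarrow> (x \<in> A \<longleftrightarrow> y \<notin> A)" and "i < length p"
  shows "p ! i \<in> A \<longleftrightarrow> (p ! 0 \<in> A \<longleftrightarrow> even i)"
  using assms(3)
proof (induction i)
  case (Suc i)
  have "E (p ! i) (p ! Suc i)" using assms(1) Suc.prems by (simp add: is_walk_def)
  then show ?case using Suc assms(2) by auto
qed simp

lemma bipartite_walks_same_parity:
  assumes "bipartite_graph V E"
    and "is_walk V E p" "hd p = u" "last p = w"
    and "is_walk V E q" "hd q = u" "last q = w"
  shows "even (length p) = even (length q)"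
proof -
  obtain A where A: "\<forall>x y. E x y \<longrightarrow> (x \<in> A \<longleftrightarrow> y \<notin> A)"
    using assms(1) unfolding bipartite_graph_def by blast
  have ends: "w \<in> A \<longleftrightarrow> (u \<in> A \<longleftrightarrow> odd (length r))"
    if "is_walk V E r" "hd r = u" "last r = w" for r
  proof -
    have "r \<noteq> []" using that(1) by (simp add: is_walk_def)
    then have "r ! 0 = u" "r ! (length r - 1) = w"
      using that by (auto simp: hd_conv_nth last_conv_nth)
    with bipartite_walk_nth[OF that(1) A, of "length r - 1"] \<open>r \<noteq> []\<close> show ?thesis
      by (cases r) auto
  qed
  show ?thesis using ends[OF assms(2-4)] ends[OF assms(5-7)] by blast
qed

lemma level_partition_level_walk:
  assumes "simple_graph V E" and "level_partition V E S" and "rooted_in S v"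
    and "j < length S" and "u \<in> S ! j"
  shows "\<exists>p. is_walk V E p \<and> hd p = u \<and> last p = v \<and> length p = Suc j"
  using assms(4,5)
proof (induction j arbitrary: u)
  case 0
  have "v \<in> V"
    using assms(2,3) unfolding level_partition_def rooted_in_def
    by (metis Union_iff insertI1 nth_mem length_greater_0_conv)
  with 0 assms(3) show ?case
    by (intro exI[of _ "[v]"]) (simp add: is_walk_def rooted_in_def)
next
  case (Suc j)
  have "S ! Suc j \<subseteq> nbhd E (S ! j)"
    using assms(2) Suc.prems(1) unfolding level_partition_def
    by (metis diff_Suc_1 le_add1 plus_1_eq_Suc)
  then obtain x where x: "x \<in> S ! j" "E x u" using Suc.prems(2) by (auto simp: nbhd_def)
  obtain p where p: "is_walk V E p" "hd p = x" "last p = v" "length p = Suc j"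
    using Suc.IH[of x] Suc.prems(1) x(1) by auto
  have "E u x" "u \<in> V" using assms(1) x(2) by (auto simp: simple_graph_def)
  then have "is_walk V E (u # p)" using is_walk_Cons[OF p(1)] p(2) by simp
  with p show ?case by (intro exI[of _ "u # p"]) auto
qed

lemma level_partition_level_ge_gdist:
  assumes "simple_graph V E" and "level_partition V E S" and "rooted_in S v"
    and "j < length S" and "u \<in> S ! j"
  shows "gdist V E u v \<le> j"
  using level_partition_level_walk[OF assms] gdist_le_walk_length by fastforce

lemma level_partition_level_parity:
  assumes "simple_graph V E" and "connected_graph V E" and "bipartite_graph V E"
    and "level_partition V E S" and "rooted_in S v"
    and "v \<in> V" and "u \<in> V" and "j < length S" and "u \<in> S ! j"
  shows "even j = even (gdist V E u v)"
proof -
  obtain p where p: "is_walk V E p" "hd p = u" "last p = v" "length p = Suc j"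
    using level_partition_level_walk[OF assms(1,4,5,8,9)] by blast
  obtain q where q: "is_walk V E q" "hd q = u" "last q = v" "length q = Suc (gdist V E u v)"
    using gdist_walk[OF assms(2,7,6)] .
  show ?thesis using bipartite_walks_same_parity[OF assms(3) p(1-3) q(1-3)] p(4) q(4) by simp
qed

lemma level_partition_covers:
  assumes "level_partition V E S" and "u \<in> V"
  shows "\<exists>j < length S. u \<in> S ! j"
  using assms unfolding level_partition_def by (auto simp: in_set_conv_nth)

lemma level_disjoint_levels_inj:
  assumes "\<forall>i\<in>I. \<forall>l\<in>I. i \<noteq> l \<longrightarrow> level_disjoint (P i) (P l)"
    and "\<forall>i\<in>I. 1 \<le> f i \<and> f i < length (P i) \<and> u \<in> P i ! f i"
  shows "inj_on f I"
proof (rule inj_onI, rule ccontr)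
  fix i l assume i: "i \<in> I" and l: "l \<in> I" and eq: "f i = f l" and "i \<noteq> l"
  then have "level_disjoint (P i) (P l)" using assms(1) by blast
  moreover have "1 \<le> f i" "f i \<le> height (P i)" "f i \<le> height (P l)"
    using assms(2) i l eq by (auto simp: height_def)
  ultimately have "P i ! f i \<inter> P l ! f i = {}" unfolding level_disjoint_def by auto
  moreover have "u \<in> P i ! f i" "u \<in> P l ! f i" using assms(2) i l eq by auto
  ultimately show False by blast
qed

lemma card_le_interval:
  fixes N :: "nat set"
  assumes "N \<subseteq> {e..H}" and "N \<noteq> {}"
  shows "e + card N \<le> H + 1"
proof -
  have "card N \<le> Suc H - e" using card_mono[OF _ assms(1)] by simp
  moreover have "e \<le> H" using assms by auto
  ultimately show ?thesis by linarith
qed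

lemma card_le_interval_same_parity:
  fixes N :: "nat set"
  assumes "N \<subseteq> {e..H}" and "N \<noteq> {}" and "\<forall>n\<in>N. even n = even e"
  shows "e + 2 * card N \<le> H + 2"
proof -
  have "N \<subseteq> (\<lambda>m. e + 2 * m) ` {..(H - e) div 2}"
  proof
    fix n assume n: "n \<in> N"
    then have "e \<le> n" "n \<le> H" "even (n - e)" using assms(1,3) by auto
    then have "n = e + 2 * ((n - e) div 2)" "(n - e) div 2 \<le> (H - e) div 2"
      by (auto intro: div_le_mono)
    then show "n \<in> (\<lambda>m. e + 2 * m) ` {..(H - e) div 2}" by blast
  qed
  then have "card N \<le> card ((\<lambda>m. e + 2 * m) ` {..(H - e) div 2})"
    by (intro card_mono) auto
  also have "\<dots> \<le> (H - e) div 2 + 1"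
    using card_image_le[of "{..(H - e) div 2}" "\<lambda>m. e + 2 * m"] by simp
  finally have "card N \<le> (H - e) div 2 + 1" .
  moreover have "e \<le> H" using assms(1,2) by auto
  ultimately show ?thesis by linarith
qed

theorem mainTheorem6:
  fixes V :: "'a set" and E :: "'a \<Rightarrow> 'a \<Rightarrow> bool" and v :: 'a
    and k :: nat and P :: "nat \<Rightarrow> 'a set list"
  assumes "simple_graph V E" and "connected_graph V E" and "card V \<ge> 2"
    and "v \<in> V" and "k \<ge> 1"
    and "\<forall>i\<in>{1..k}. level_partition V E (P i) \<and> rooted_in (P i) v"
    and "\<forall>i\<in>{1..k}. \<forall>j\<in>{1..k}. i \<noteq> j \<longrightarrow> level_disjoint (P i) (P j)"
  shows "(\<not> bipartite_graph V E \<longrightarrow> Max ((\<lambda>i. height (P i)) ` {1..k}) \<ge> ecc V E v + k - 1)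
       \<and> (bipartite_graph V E \<longrightarrow> Max ((\<lambda>i. height (P i)) ` {1..k}) \<ge> ecc V E v + 2 * k - 2)"
proof -
  define H where "H = Max ((\<lambda>i. height (P i)) ` {1..k})"
  have fin: "finite V" using assms(1) by (simp add: simple_graph_def)
  obtain u where u: "u \<in> V" "gdist V E u v = ecc V E v" using ecc_attained[OF fin assms(4)] .
  have "\<forall>i\<in>{1..k}. \<exists>j. j < length (P i) \<and> u \<in> P i ! j"
    using level_partition_covers[OF _ u(1)] assms(6) by blast
  then obtain f where f: "\<forall>i\<in>{1..k}. f i < length (P i) \<and> u \<in> P i ! f i"
    by (metis bchoice)
  have f_ge: "ecc V E v \<le> f i" if "i \<in> {1..k}" for i
    using level_partition_level_ge_gdist[OF assms(1), of "P i" v "f i" u] assms(6) f that u(2)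
    by simp
  have f_le: "f i \<le> H" if "i \<in> {1..k}" for i
  proof -
    have "height (P i) \<le> H" unfolding H_def using that by (intro Max_ge) auto
    then show ?thesis using f that unfolding height_def by fastforce
  qed
  have "inj_on f {1..k}"
  proof (rule level_disjoint_levels_inj[OF assms(7)])
    show "\<forall>i\<in>{1..k}. 1 \<le> f i \<and> f i < length (P i) \<and> u \<in> P i ! f i"
      using f f_ge ecc_pos[OF fin assms(2-4)] by (simp add: Suc_le_eq order_less_le_trans)
  qed
  then have card_f: "card (f ` {1..k}) = k" by (simp add: card_image)
  have range_f: "f ` {1..k} \<subseteq> {ecc V E v..H}" "f ` {1..k} \<noteq> {}"
    using f_ge f_le assms(5) by auto
  have "even (f i) = even (ecc V E v)" if "bipartite_graph V E" "i \<in> {1..k}" for i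
    using level_partition_level_parity[OF assms(1,2) that(1) _ _ assms(4) u(1), of "P i" "f i"]
      assms(6) f that(2) u(2) by simp
  then show ?thesis
    using card_le_interval[OF range_f] card_le_interval_same_parity[OF range_f]
    unfolding card_f H_def by auto
qed

end
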